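(* Let $\Omega\subset\mathbb{R}^d$ be open and connected, $m\ge1$, $p\colon\Omega\to[1,2]$ measurable, $X=L^2(\Omega,\mathbb{R}^m)$, $\rho_p(f)=\int_\Omega|f(x)|^{p(x)}\,dx$, and $\tau>0$. Then for every $f\in X$ and almost every $x\in\Omega$, $$\operatorname{prox}_{\tau\rho_p^*}(f)(x)=V_\tau\big(f(x),p(x)\big)\,\frac{f(x)}{|f(x)|},$$ with the convention that the value is $0$ if $f(x)=0$, where $$V_\tau(z,q)=\begin{cases}\min\{|z|,1\}, & q=1,\\ \frac{2|z|}{\tau+2}, & q=2,\\ |z|-\bar\alpha(|z|,q,\tau^{1-q}), & 1<q<2,\end{cases}$$ and, for $a>0$ and $s>0$, $\bar\alpha(a,q,s)$ denotes the unique solution $\alpha\in(0,a)$ of $\alpha+s\,q\,\alpha^{q-1}=a$. *)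

theory Defs
  imports "HOL-Analysis.Analysis"
begin

definition L2 :: "('a::euclidean_space) set \<Rightarrow> ('a \<Rightarrow> 'b::euclidean_space) set" where
  "L2 \<Omega> = {f. f \<in> borel_measurable (lebesgue_on \<Omega>) \<and>
                 integrable (lebesgue_on \<Omega>) (\<lambda>x. (norm (f x))\<^sup>2)}"

definition inner_L2 :: "('a::euclidean_space) set \<Rightarrow> ('a \<Rightarrow> 'b::euclidean_space) \<Rightarrow> ('a \<Rightarrow> 'b) \<Rightarrow> real" where
  "inner_L2 \<Omega> f g = (\<integral>x. f x \<bullet> g x \<partial>lebesgue_on \<Omega>)"

definition normsq_L2 :: "('a::euclidean_space) set \<Rightarrow> ('a \<Rightarrow> 'b::euclidean_space) \<Rightarrow> real" where
  "normsq_L2 \<Omega> f = (\<integral>x. (norm (f x))\<^sup>2 \<partial>lebesgue_on \<Omega>)"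

definition rho :: "('a::euclidean_space) set \<Rightarrow> ('a \<Rightarrow> real) \<Rightarrow> ('a \<Rightarrow> 'b::euclidean_space) \<Rightarrow> ereal" where
  "rho \<Omega> p f = enn2ereal (\<integral>\<^sup>+ x. ennreal (norm (f x) powr p x) \<partial>lebesgue_on \<Omega>)"

definition conj_L2 :: "('a::euclidean_space) set \<Rightarrow> (('a \<Rightarrow> 'b::euclidean_space) \<Rightarrow> ereal)
                        \<Rightarrow> ('a \<Rightarrow> 'b) \<Rightarrow> ereal" where
  "conj_L2 \<Omega> h g = (SUP f \<in> L2 \<Omega>. ereal (inner_L2 \<Omega> g f) - h f)"

definition is_prox :: "('a::euclidean_space) set \<Rightarrow> (('a \<Rightarrow> 'b::euclidean_space) \<Rightarrow> ereal)
                        \<Rightarrow> real \<Rightarrow> ('a \<Rightarrow> 'b) \<Rightarrow> ('a \<Rightarrow> 'b) \<Rightarrow> bool" where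
  "is_prox \<Omega> h \<tau> f u \<longleftrightarrow> u \<in> L2 \<Omega> \<and>
     (\<forall>v \<in> L2 \<Omega>. ereal \<tau> * h u + ereal (normsq_L2 \<Omega> (\<lambda>x. u x - f x) / 2)
                  \<le> ereal \<tau> * h v + ereal (normsq_L2 \<Omega> (\<lambda>x. v x - f x) / 2))"

definition alpha_bar :: "real \<Rightarrow> real \<Rightarrow> real \<Rightarrow> real" where
  "alpha_bar a q s = (THE \<alpha>. 0 < \<alpha> \<and> \<alpha> < a \<and> \<alpha> + s * q * \<alpha> powr (q - 1) = a)"

definition V :: "real \<Rightarrow> 'b::real_normed_vector \<Rightarrow> real \<Rightarrow> real" where
  "V \<tau> z q = (if q = 1 then min (norm z) 1
              else if q = 2 then 2 * norm z / (\<tau> + 2)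
              else norm z - alpha_bar (norm z) q (\<tau> powr (1 - q)))"

end

theory Submission
  imports Defs
begin

text \<open>Write \<open>u = V\<^sub>\<tau>(f, p) sgn f\<close> and \<open>g = (f - u) / \<tau>\<close>. Pointwise, \<open>u(x)\<close> is a
  subgradient of \<open>|\<cdot>|\<^bsup>p(x)\<^esup>\<close> at \<open>g(x)\<close> (for \<open>p(x) > 1\<close> it is the derivative
  \<open>p c\<^bsup>p-1\<^esup>\<close> at \<open>c = |g(x)|\<close>, which is what the equation defining \<open>alpha_bar\<close>
  encodes), so \<open>y \<mapsto> u(x) \<bullet> y - |y|\<^bsup>p(x)\<^esup>\<close> is maximised at \<open>g(x)\<close>. Integrating,
  the supremum defining \<open>\<rho>\<^sub>p\<^sup>*(u)\<close> is attained at \<open>g\<close>, hence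
  \<open>\<rho>\<^sub>p\<^sup>*(v) \<ge> \<rho>\<^sub>p\<^sup>*(u) + \<langle>v - u, g\<rangle>\<close> for all \<open>v\<close>. Since \<open>f - u = \<tau> g\<close>, completing the
  square gives \<open>\<tau> \<rho>\<^sub>p\<^sup>*(v) + \<parallel>v - f\<parallel>\<^sup>2/2 \<ge> \<tau> \<rho>\<^sub>p\<^sup>*(u) + \<parallel>u - f\<parallel>\<^sup>2/2 + \<parallel>v - u\<parallel>\<^sup>2/2\<close>,
  so \<open>u\<close> is the minimiser of the proximal problem, unique up to null sets.\<close>

lemma powr_tangent_le:
  fixes q c t :: real
  assumes "1 \<le> q" "0 < c" "0 \<le> t"
  shows "c powr q + q * c powr (q - 1) * (t - c) \<le> t powr q"
proof (cases "t = 0")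
  case True
  have "c powr q = c * c powr (q - 1)"
    using assms by (simp add: powr_mult_base)
  then have "c powr q + q * c powr (q - 1) * (t - c) = (1 - q) * c powr q"
    using True by (simp add: algebra_simps)
  also have "\<dots> \<le> 0" using assms by (simp add: mult_nonpos_nonneg)
  finally show ?thesis using True by simp
next
  case False
  have "q * c powr (q - 1) * (t - c) \<le> t powr q - c powr q"
    using assms False
    by (intro convex_on_imp_above_tangent[OF powr_convex[OF assms(1)]])
       (auto simp: interior_open intro!: has_field_derivative_at_within has_real_derivative_powr)
  then show ?thesis by simp
qed

lemma alpha_bar_lhs_strict_mono:
  fixes s q x y :: real
  assumes "0 < s" "1 < q" "0 \<le> x" "x < y"
  shows "x + s * q * x powr (q - 1) < y + s * q * y powr (q - 1)"
proof -
  have "x powr (q - 1) \<le> y powr (q - 1)"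
    using assms by (intro powr_mono2) auto
  then have "s * q * x powr (q - 1) \<le> s * q * y powr (q - 1)"
    using assms by (intro mult_left_mono) auto
  then show ?thesis using assms by linarith
qed

lemma alpha_bar:
  fixes a q s :: real
  assumes "0 < a" "0 < s" "1 < q"
  shows "0 < alpha_bar a q s" "alpha_bar a q s < a"
    "alpha_bar a q s + s * q * alpha_bar a q s powr (q - 1) = a"
proof -
  define F where "F x = x + s * q * x powr (q - 1)" for x :: real
  have "continuous_on {0..a} F"
    unfolding F_def using assms by (intro continuous_intros continuous_on_powr') auto
  moreover have "F 0 \<le> a" "a \<le> F a"
    unfolding F_def using assms by auto
  ultimately obtain x where x: "0 \<le> x" "x \<le> a" "F x = a"
    using IVT'[of F 0 a a] assms by auto
  have "x \<noteq> 0" "x \<noteq> a"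
    using x assms by (auto simp: F_def)
  with x have x: "0 < x" "x < a" "F x = a"
    by auto
  have "alpha_bar a q s = x"
    unfolding alpha_bar_def
  proof (rule the_equality)
    show "0 < x \<and> x < a \<and> x + s * q * x powr (q - 1) = a"
      using x by (simp add: F_def)
    fix y assume "0 < y \<and> y < a \<and> y + s * q * y powr (q - 1) = a"
    then show "y = x"
      using x alpha_bar_lhs_strict_mono[OF assms(2,3), of x y]
        alpha_bar_lhs_strict_mono[OF assms(2,3), of y x]
      by (cases x y rule: linorder_cases) (auto simp: F_def)
  qed
  then show "0 < alpha_bar a q s" "alpha_bar a q s < a"
    "alpha_bar a q s + s * q * alpha_bar a q s powr (q - 1) = a"
    using x by (auto simp: F_def)
qed

lemma less_alpha_bar_iff:
  fixes a q s r :: real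
  assumes "0 < a" "0 < s" "1 < q" "0 < r"
  shows "r < alpha_bar a q s \<longleftrightarrow> r + s * q * r powr (q - 1) < a"
  using alpha_bar[OF assms(1-3)] assms(4)
    alpha_bar_lhs_strict_mono[OF assms(2,3), of r "alpha_bar a q s"]
    alpha_bar_lhs_strict_mono[OF assms(2,3), of "alpha_bar a q s" r]
  by (cases r "alpha_bar a q s" rule: linorder_cases) auto

lemma V_eq_powr_derivative:
  fixes z :: "'b::real_normed_vector"
  assumes "z \<noteq> 0" "1 < q" "q \<le> 2" "0 < \<tau>"
  defines "c \<equiv> (norm z - V \<tau> z q) / \<tau>"
  shows "0 < c" "V \<tau> z q = q * c powr (q - 1)"
proof -
  have "0 < c \<and> V \<tau> z q = q * c powr (q - 1)"
  proof (cases "q = 2")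
    case True
    then have "V \<tau> z q = 2 * norm z / (\<tau> + 2)"
      by (simp add: V_def)
    moreover have "norm z - 2 * norm z / (\<tau> + 2) = \<tau> * (norm z / (\<tau> + 2))"
      using assms(4) by (simp add: field_simps)
    ultimately have "c = norm z / (\<tau> + 2)" "V \<tau> z q = 2 * c"
      using assms(4) by (simp_all add: c_def)
    then show ?thesis
      using True assms(1,4) by simp
  next
    case False
    define s where "s = \<tau> powr (1 - q)"
    have "0 < s"
      using assms(4) by (simp add: s_def)
    define \<alpha> where "\<alpha> = alpha_bar (norm z) q s"
    have \<alpha>: "0 < \<alpha>" "\<alpha> + s * q * \<alpha> powr (q - 1) = norm z"
      using alpha_bar[OF _ \<open>0 < s\<close> assms(2)] assms(1) by (simp_all add: \<alpha>_def)
    have "V \<tau> z q = norm z - \<alpha>"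
      using False assms(2) by (simp add: V_def \<alpha>_def s_def)
    then have "c = \<alpha> / \<tau>"
      by (simp add: c_def)
    \<comment> \<open>with \<open>\<alpha> = \<tau> c\<close> the equation defining \<open>alpha_bar\<close> becomes \<open>|z| - \<tau> c = q c\<^bsup>q-1\<^esup>\<close>\<close>
    moreover have "s * \<alpha> powr (q - 1) = (\<alpha> / \<tau>) powr (q - 1)"
      using assms(4) powr_minus[of \<tau> "q - 1"] by (simp add: s_def powr_divide field_simps)
    ultimately show ?thesis
      using \<alpha> \<open>V \<tau> z q = norm z - \<alpha>\<close> assms(4) by (simp add: algebra_simps)
  qed
  then show "0 < c" "V \<tau> z q = q * c powr (q - 1)"
    by auto
qed

lemma V_mult_minus_powr_le:
  fixes z :: "'b::real_normed_vector"
  assumes "z \<noteq> 0" "1 \<le> q" "q \<le> 2" "0 < \<tau>" "0 \<le> t"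
  defines "c \<equiv> (norm z - V \<tau> z q) / \<tau>"
  shows "0 \<le> V \<tau> z q" "V \<tau> z q \<le> norm z"
    "V \<tau> z q * t - t powr q \<le> V \<tau> z q * c - c powr q"
proof -
  have "0 \<le> V \<tau> z q \<and> V \<tau> z q \<le> norm z \<and> V \<tau> z q * t - t powr q \<le> V \<tau> z q * c - c powr q"
  proof (cases "q = 1")
    case True
    then show ?thesis
      using assms by (cases "norm z \<le> 1") (auto simp: V_def c_def mult_left_le_one_le)
  next
    case False
    then have "1 < q"
      using assms(2) by simp
    note c = V_eq_powr_derivative[OF assms(1) this assms(3,4), folded c_def]
    have "c powr q + q * c powr (q - 1) * (t - c) \<le> t powr q"
      using powr_tangent_le assms(2,5) c(1) by blast
    moreover have "V \<tau> z q < norm z"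
      using c(1) assms(4) by (simp add: c_def zero_less_divide_iff)
    ultimately show ?thesis
      using c \<open>1 < q\<close> by (simp add: algebra_simps)
  qed
  then show "0 \<le> V \<tau> z q" "V \<tau> z q \<le> norm z"
    "V \<tau> z q * t - t powr q \<le> V \<tau> z q * c - c powr q"
    by auto
qed

lemma norm_V_sgn_le:
  fixes z :: "'b::real_normed_vector"
  assumes "1 \<le> q" "q \<le> 2" "0 < \<tau>"
  shows "norm (V \<tau> z q *\<^sub>R sgn z) \<le> norm z"
proof (cases "z = 0")
  case False
  then show ?thesis
    using V_mult_minus_powr_le(1,2)[OF False assms order_refl] by (simp add: norm_sgn)
qed simp

lemma V_sgn_inner_minus_powr_le:
  fixes z y :: "'b::real_inner"
  assumes "1 \<le> q" "q \<le> 2" "0 < \<tau>"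
  defines "w \<equiv> V \<tau> z q *\<^sub>R sgn z"
  shows "w \<bullet> y - norm y powr q \<le> w \<bullet> ((1 / \<tau>) *\<^sub>R (z - w)) - norm ((1 / \<tau>) *\<^sub>R (z - w)) powr q"
proof (cases "z = 0")
  case False
  define c where "c = (norm z - V \<tau> z q) / \<tau>"
  note S = V_mult_minus_powr_le[OF False assms(1-3) norm_ge_zero[of y], folded c_def]
  have "0 \<le> c"
    using S(2) assms(3) by (simp add: c_def)
  define e where "e = sgn z"
  have "norm e = 1"
    using False by (simp add: e_def norm_sgn)
  then have "e \<bullet> e = 1"
    by (simp flip: power2_norm_eq_inner)
  have "z = norm z *\<^sub>R e"
    using False by (simp add: e_def sgn_div_norm)
  then have "z - w = (norm z - V \<tau> z q) *\<^sub>R e"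
    by (metis scaleR_diff_left w_def e_def)
  then have "(1 / \<tau>) *\<^sub>R (z - w) = c *\<^sub>R e"
    by (simp add: c_def)
  moreover have "w \<bullet> y \<le> V \<tau> z q * norm y"
    using norm_cauchy_schwarz[of w y] S(1) \<open>norm e = 1\<close> by (simp add: w_def e_def[symmetric])
  ultimately show ?thesis
    using S \<open>norm e = 1\<close> \<open>e \<bullet> e = 1\<close> \<open>0 \<le> c\<close> by (simp add: w_def e_def[symmetric] mult.commute)
qed (simp add: w_def)

lemma L2_measurable: "f \<in> L2 \<Omega> \<Longrightarrow> f \<in> borel_measurable (lebesgue_on \<Omega>)"
  and L2_integrable_norm_sq: "f \<in> L2 \<Omega> \<Longrightarrow> integrable (lebesgue_on \<Omega>) (\<lambda>x. (norm (f x))\<^sup>2)"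
  unfolding L2_def by auto

lemma L2_dominated:
  fixes f :: "'a::euclidean_space \<Rightarrow> 'b::euclidean_space" and g :: "'a \<Rightarrow> 'c::euclidean_space"
  assumes "f \<in> L2 \<Omega>" "g \<in> borel_measurable (lebesgue_on \<Omega>)"
    and "\<And>x. x \<in> \<Omega> \<Longrightarrow> norm (g x) \<le> norm (f x)"
  shows "g \<in> L2 \<Omega>"
  unfolding L2_def
proof (intro CollectI conjI assms(2))
  show "integrable (lebesgue_on \<Omega>) (\<lambda>x. (norm (g x))\<^sup>2)"
    using assms by (intro Bochner_Integration.integrable_bound[OF L2_integrable_norm_sq[OF assms(1)]])
      (auto intro!: AE_I2 power_mono)
qed

lemma integrable_inner_L2:
  fixes f g :: "'a::euclidean_space \<Rightarrow> 'b::euclidean_space"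
  assumes "f \<in> L2 \<Omega>" "g \<in> L2 \<Omega>"
  shows "integrable (lebesgue_on \<Omega>) (\<lambda>x. f x \<bullet> g x)"
proof (rule Bochner_Integration.integrable_bound)
  show "integrable (lebesgue_on \<Omega>) (\<lambda>x. (norm (f x))\<^sup>2 + (norm (g x))\<^sup>2)"
    using assms by (simp add: L2_integrable_norm_sq)
  show "(\<lambda>x. f x \<bullet> g x) \<in> borel_measurable (lebesgue_on \<Omega>)"
    using assms L2_measurable by measurable
  have "\<bar>f x \<bullet> g x\<bar> \<le> (norm (f x))\<^sup>2 + (norm (g x))\<^sup>2" for x
    using Cauchy_Schwarz_ineq2[of "f x" "g x"] sum_squares_bound[of "norm (f x)" "norm (g x)"]
      mult_nonneg_nonneg[OF norm_ge_zero norm_ge_zero, of "f x" "g x"]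
    by linarith
  then show "AE x in lebesgue_on \<Omega>. norm (f x \<bullet> g x) \<le> norm ((norm (f x))\<^sup>2 + (norm (g x))\<^sup>2)"
    by (intro AE_I2) simp
qed

lemma L2_diff:
  fixes f g :: "'a::euclidean_space \<Rightarrow> 'b::euclidean_space"
  assumes "f \<in> L2 \<Omega>" "g \<in> L2 \<Omega>"
  shows "(\<lambda>x. f x - g x) \<in> L2 \<Omega>"
proof -
  have "(norm (f x - g x))\<^sup>2 = (norm (f x))\<^sup>2 + (norm (g x))\<^sup>2 - 2 * (f x \<bullet> g x)" for x
    by (simp add: power2_norm_eq_inner inner_diff_left inner_diff_right inner_commute)
  moreover have "integrable (lebesgue_on \<Omega>) (\<lambda>x. (norm (f x))\<^sup>2 + (norm (g x))\<^sup>2 - 2 * (f x \<bullet> g x))"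
    using assms by (simp add: L2_integrable_norm_sq integrable_inner_L2)
  ultimately show ?thesis
    using assms L2_measurable unfolding L2_def by auto
qed

lemma L2_scaleR:
  fixes f :: "'a::euclidean_space \<Rightarrow> 'b::euclidean_space"
  assumes "f \<in> L2 \<Omega>"
  shows "(\<lambda>x. c *\<^sub>R f x) \<in> L2 \<Omega>"
proof -
  have "(\<lambda>x. c *\<^sub>R f x) \<in> borel_measurable (lebesgue_on \<Omega>)"
    using L2_measurable[OF assms] by measurable
  then show ?thesis
    using assms unfolding L2_def by (simp add: power_mult_distrib)
qed

lemma inner_L2_cong_AE:
  assumes "u \<in> borel_measurable (lebesgue_on \<Omega>)" "u' \<in> borel_measurable (lebesgue_on \<Omega>)"
    and "g \<in> borel_measurable (lebesgue_on \<Omega>)" "AE x in lebesgue_on \<Omega>. u x = u' x"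
  shows "inner_L2 \<Omega> u g = inner_L2 \<Omega> u' g"
  unfolding inner_L2_def using assms by (intro integral_cong_AE) (auto elim: eventually_mono)

lemma normsq_L2_diff_cong_AE:
  assumes "u \<in> borel_measurable (lebesgue_on \<Omega>)" "u' \<in> borel_measurable (lebesgue_on \<Omega>)"
    and "f \<in> borel_measurable (lebesgue_on \<Omega>)" "AE x in lebesgue_on \<Omega>. u x = u' x"
  shows "normsq_L2 \<Omega> (\<lambda>x. u x - f x) = normsq_L2 \<Omega> (\<lambda>x. u' x - f x)"
  unfolding normsq_L2_def using assms by (intro integral_cong_AE) (auto elim: eventually_mono)

lemma conj_L2_cong_AE:
  assumes "u \<in> L2 \<Omega>" "u' \<in> L2 \<Omega>" "AE x in lebesgue_on \<Omega>. u x = u' x"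
  shows "conj_L2 \<Omega> h u = conj_L2 \<Omega> h u'"
proof -
  have "inner_L2 \<Omega> u g = inner_L2 \<Omega> u' g" if "g \<in> L2 \<Omega>" for g
    using assms that by (intro inner_L2_cong_AE L2_measurable)
  then show ?thesis
    unfolding conj_L2_def by simp
qed

lemma borel_measurable_alpha_bar:
  fixes a q s :: "'a \<Rightarrow> real"
  assumes [measurable]: "a \<in> borel_measurable M" "q \<in> borel_measurable M" "s \<in> borel_measurable M"
  shows "(\<lambda>x. if 0 < a x \<and> 0 < s x \<and> 1 < q x then alpha_bar (a x) (q x) (s x) else 0)
    \<in> borel_measurable M" (is "?A \<in> _")
  unfolding borel_measurable_iff_greater
proof
  fix r :: real
  let ?C = "\<lambda>x. 0 < a x \<and> 0 < s x \<and> 1 < q x"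
  have "{x \<in> space M. r < ?A x} = {x \<in> space M.
      (?C x \<and> (r \<le> 0 \<or> r + s x * q x * r powr (q x - 1) < a x)) \<or> (\<not> ?C x \<and> r < 0)}"
  proof (rule Collect_cong)
    fix x
    show "(x \<in> space M \<and> r < ?A x) \<longleftrightarrow> (x \<in> space M \<and>
      ((?C x \<and> (r \<le> 0 \<or> r + s x * q x * r powr (q x - 1) < a x)) \<or> (\<not> ?C x \<and> r < 0)))"
      using alpha_bar(1)[of "a x" "s x" "q x"] less_alpha_bar_iff[of "a x" "s x" "q x" r]
      by (cases "?C x"; cases "r \<le> 0") auto
  qed
  also have "\<dots> \<in> sets M"
    by measurable
  finally show "{x \<in> space M. r < ?A x} \<in> sets M" .
qed

lemma borel_measurable_V_sgn:
  fixes f :: "'a \<Rightarrow> 'b::euclidean_space"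
  assumes [measurable]: "f \<in> borel_measurable M" "p \<in> borel_measurable M"
    and "\<And>x. x \<in> space M \<Longrightarrow> 1 \<le> p x \<and> p x \<le> 2" "0 < \<tau>"
  shows "(\<lambda>x. V \<tau> (f x) (p x) *\<^sub>R sgn (f x)) \<in> borel_measurable M"
proof -
  define A where "A x = (if 0 < norm (f x) \<and> 0 < \<tau> powr (1 - p x) \<and> 1 < p x
    then alpha_bar (norm (f x)) (p x) (\<tau> powr (1 - p x)) else 0)" for x
  have [measurable]: "A \<in> borel_measurable M"
    unfolding A_def by (rule borel_measurable_alpha_bar) measurable
  have "(\<lambda>x. (if p x = 1 then min (norm (f x)) 1 else if p x = 2 then 2 * norm (f x) / (\<tau> + 2)
      else norm (f x) - A x) *\<^sub>R (f x /\<^sub>R norm (f x))) \<in> borel_measurable M"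
    by measurable
  moreover have "V \<tau> (f x) (p x) *\<^sub>R sgn (f x) = (if p x = 1 then min (norm (f x)) 1
      else if p x = 2 then 2 * norm (f x) / (\<tau> + 2) else norm (f x) - A x) *\<^sub>R (f x /\<^sub>R norm (f x))"
    if "x \<in> space M" for x
    using assms(3)[OF that] assms(4) by (cases "f x = 0") (auto simp: V_def A_def sgn_div_norm)
  ultimately show ?thesis
    by (subst measurable_cong) auto
qed

lemma rho_eq_integral:
  assumes "integrable (lebesgue_on \<Omega>) (\<lambda>x. norm (h x) powr p x)"
  shows "rho \<Omega> p h = ereal (\<integral>x. norm (h x) powr p x \<partial>lebesgue_on \<Omega>)"
proof -
  have "(\<integral>\<^sup>+ x. ennreal (norm (h x) powr p x) \<partial>lebesgue_on \<Omega>)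
      = ennreal (\<integral>x. norm (h x) powr p x \<partial>lebesgue_on \<Omega>)"
    by (rule nn_integral_eq_integral[OF assms]) simp
  moreover have "0 \<le> (\<integral>x. norm (h x) powr p x \<partial>lebesgue_on \<Omega>)"
    by (intro integral_nonneg_AE) simp
  ultimately show ?thesis
    unfolding rho_def by simp
qed

lemma rho_eq_infinity:
  assumes [measurable]: "h \<in> borel_measurable (lebesgue_on \<Omega>)" "p \<in> borel_measurable (lebesgue_on \<Omega>)"
    and "\<not> integrable (lebesgue_on \<Omega>) (\<lambda>x. norm (h x) powr p x)"
  shows "rho \<Omega> p h = \<infinity>"
proof -
  have "(\<lambda>x. norm (h x) powr p x) \<in> borel_measurable (lebesgue_on \<Omega>)"
    by measurable
  then have "(\<integral>\<^sup>+ x. ennreal (norm (h x) powr p x) \<partial>lebesgue_on \<Omega>) < \<infinity>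
      \<Longrightarrow> integrable (lebesgue_on \<Omega>) (\<lambda>x. norm (h x) powr p x)"
    by (rule integrableI_nonneg) simp_all
  with assms(3) have "\<not> (\<integral>\<^sup>+ x. ennreal (norm (h x) powr p x) \<partial>lebesgue_on \<Omega>) < \<infinity>"
    by blast
  then show ?thesis
    unfolding rho_def by (simp add: less_top[symmetric])
qed

lemma conj_L2_ge:
  assumes "g \<in> L2 \<Omega>"
  shows "ereal (inner_L2 \<Omega> u g) - h g \<le> conj_L2 \<Omega> h u"
  unfolding conj_L2_def using assms by (rule SUP_upper)

lemma integrable_powr_of_pointwise_max:
  fixes u g :: "'a::euclidean_space \<Rightarrow> 'b::euclidean_space"
  assumes "u \<in> L2 \<Omega>" "g \<in> L2 \<Omega>" and [measurable]: "p \<in> borel_measurable (lebesgue_on \<Omega>)"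
    and max: "\<And>x y. x \<in> \<Omega> \<Longrightarrow> u x \<bullet> y - norm y powr p x \<le> u x \<bullet> g x - norm (g x) powr p x"
  shows "integrable (lebesgue_on \<Omega>) (\<lambda>x. norm (g x) powr p x)"
proof (rule Bochner_Integration.integrable_bound)
  show "integrable (lebesgue_on \<Omega>) (\<lambda>x. u x \<bullet> g x)"
    using assms(1,2) by (rule integrable_inner_L2)
  show "(\<lambda>x. norm (g x) powr p x) \<in> borel_measurable (lebesgue_on \<Omega>)"
  proof -
    have [measurable]: "g \<in> borel_measurable (lebesgue_on \<Omega>)"
      using assms(2) by (rule L2_measurable)
    show ?thesis by measurable
  qed
  show "AE x in lebesgue_on \<Omega>. norm (norm (g x) powr p x) \<le> norm (u x \<bullet> g x)"
    \<comment> \<open>compare with \<open>y = 0\<close>\<close>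
  proof (rule AE_I2)
    fix x assume "x \<in> space (lebesgue_on \<Omega>)"
    then have "norm (g x) powr p x \<le> u x \<bullet> g x"
      using max[of x 0] by simp
    then show "norm (norm (g x) powr p x) \<le> norm (u x \<bullet> g x)"
      by simp
  qed
qed

lemma inner_L2_minus_rho_le_of_pointwise_max:
  fixes u g h :: "'a::euclidean_space \<Rightarrow> 'b::euclidean_space"
  assumes "u \<in> L2 \<Omega>" "g \<in> L2 \<Omega>" "h \<in> L2 \<Omega>" "p \<in> borel_measurable (lebesgue_on \<Omega>)"
    and max: "\<And>x y. x \<in> \<Omega> \<Longrightarrow> u x \<bullet> y - norm y powr p x \<le> u x \<bullet> g x - norm (g x) powr p x"
  shows "ereal (inner_L2 \<Omega> u h) - rho \<Omega> p h \<le> ereal (inner_L2 \<Omega> u g) - rho \<Omega> p g"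
proof (cases "integrable (lebesgue_on \<Omega>) (\<lambda>x. norm (h x) powr p x)")
  case True
  have int_g: "integrable (lebesgue_on \<Omega>) (\<lambda>x. norm (g x) powr p x)"
    using assms(1,2,4) max by (rule integrable_powr_of_pointwise_max)
  have int_uh: "integrable (lebesgue_on \<Omega>) (\<lambda>x. u x \<bullet> h x)"
    using assms(1,3) by (rule integrable_inner_L2)
  have int_ug: "integrable (lebesgue_on \<Omega>) (\<lambda>x. u x \<bullet> g x)"
    using assms(1,2) by (rule integrable_inner_L2)
  have "AE x in lebesgue_on \<Omega>. u x \<bullet> h x - norm (h x) powr p x \<le> u x \<bullet> g x - norm (g x) powr p x"
    using max by (intro AE_I2) simp
  then have "(\<integral>x. u x \<bullet> h x - norm (h x) powr p x \<partial>lebesgue_on \<Omega>)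
      \<le> (\<integral>x. u x \<bullet> g x - norm (g x) powr p x \<partial>lebesgue_on \<Omega>)"
    using int_uh int_ug True int_g by (intro integral_mono_AE Bochner_Integration.integrable_diff)
  then show ?thesis
    unfolding rho_eq_integral[OF True] rho_eq_integral[OF int_g] inner_L2_def
    by (simp add: Bochner_Integration.integral_diff[OF int_uh True]
        Bochner_Integration.integral_diff[OF int_ug int_g])
next
  case False
  then show ?thesis
    using assms(3,4) by (simp add: rho_eq_infinity L2_measurable)
qed

lemma conj_rho_eq_of_pointwise_max:
  fixes u g :: "'a::euclidean_space \<Rightarrow> 'b::euclidean_space"
  assumes "u \<in> L2 \<Omega>" "g \<in> L2 \<Omega>" "p \<in> borel_measurable (lebesgue_on \<Omega>)"
    and "\<And>x y. x \<in> \<Omega> \<Longrightarrow> u x \<bullet> y - norm y powr p x \<le> u x \<bullet> g x - norm (g x) powr p x"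
  shows "rho \<Omega> p g = ereal (\<integral>x. norm (g x) powr p x \<partial>lebesgue_on \<Omega>)"
    and "conj_L2 \<Omega> (rho \<Omega> p) u = ereal (inner_L2 \<Omega> u g) - rho \<Omega> p g"
proof -
  show "rho \<Omega> p g = ereal (\<integral>x. norm (g x) powr p x \<partial>lebesgue_on \<Omega>)"
    using assms by (intro rho_eq_integral integrable_powr_of_pointwise_max)
  show "conj_L2 \<Omega> (rho \<Omega> p) u = ereal (inner_L2 \<Omega> u g) - rho \<Omega> p g"
  proof (rule antisym)
    show "conj_L2 \<Omega> (rho \<Omega> p) u \<le> ereal (inner_L2 \<Omega> u g) - rho \<Omega> p g"
      unfolding conj_L2_def using assms
      by (intro SUP_least inner_L2_minus_rho_le_of_pointwise_max)
    show "ereal (inner_L2 \<Omega> u g) - rho \<Omega> p g \<le> conj_L2 \<Omega> (rho \<Omega> p) u"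
      using assms(2) by (rule conj_L2_ge)
  qed
qed

lemma normsq_L2_nonneg: "0 \<le> normsq_L2 \<Omega> f"
  unfolding normsq_L2_def by (rule integral_nonneg_AE) simp

lemma normsq_L2_diff_eq_0_iff:
  fixes u v :: "'a::euclidean_space \<Rightarrow> 'b::euclidean_space"
  assumes "u \<in> L2 \<Omega>" "v \<in> L2 \<Omega>"
  shows "normsq_L2 \<Omega> (\<lambda>x. u x - v x) = 0 \<longleftrightarrow> (AE x in lebesgue_on \<Omega>. u x = v x)"
proof -
  have "normsq_L2 \<Omega> (\<lambda>x. u x - v x) = 0 \<longleftrightarrow> (AE x in lebesgue_on \<Omega>. (norm (u x - v x))\<^sup>2 = 0)"
    unfolding normsq_L2_def
    using L2_integrable_norm_sq[OF L2_diff[OF assms]] by (intro integral_nonneg_eq_0_iff_AE) auto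
  then show ?thesis
    by simp
qed

lemma inner_norm_sq_prox_identity:
  fixes u v f g :: "'b::real_inner"
  assumes "f - u = \<tau> *\<^sub>R g"
  shows "\<tau> * (v \<bullet> g) - \<tau> * (u \<bullet> g) + (norm (v - f))\<^sup>2 / 2 - (norm (u - f))\<^sup>2 / 2
    = (norm (v - u))\<^sup>2 / 2"
proof -
  have "f = u + \<tau> *\<^sub>R g"
    using assms by (simp add: algebra_simps)
  then show ?thesis
    by (simp add: power2_norm_eq_inner inner_diff_left inner_diff_right inner_add_left
        inner_add_right inner_commute algebra_simps) (simp add: field_simps power2_eq_square)
qed

lemma inner_normsq_L2_prox_identity:
  assumes "f \<in> L2 \<Omega>" "u \<in> L2 \<Omega>" "g \<in> L2 \<Omega>" "v \<in> L2 \<Omega>" "\<And>x. f x - u x = \<tau> *\<^sub>R g x"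
  shows "\<tau> * inner_L2 \<Omega> v g - \<tau> * inner_L2 \<Omega> u g + normsq_L2 \<Omega> (\<lambda>x. v x - f x) / 2
    - normsq_L2 \<Omega> (\<lambda>x. u x - f x) / 2 = normsq_L2 \<Omega> (\<lambda>x. v x - u x) / 2"
proof -
  have "(\<integral>x. \<tau> * (v x \<bullet> g x) - \<tau> * (u x \<bullet> g x) + (norm (v x - f x))\<^sup>2 / 2
      - (norm (u x - f x))\<^sup>2 / 2 \<partial>lebesgue_on \<Omega>) = (\<integral>x. (norm (v x - u x))\<^sup>2 / 2 \<partial>lebesgue_on \<Omega>)"
    using assms(5) by (intro Bochner_Integration.integral_cong refl inner_norm_sq_prox_identity)
  then show ?thesis
    using assms(1-4)
    by (simp add: inner_L2_def normsq_L2_def integrable_inner_L2 L2_integrable_norm_sq L2_diff)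
qed

lemma prox_objective_lower_bound:
  assumes "f \<in> L2 \<Omega>" "u \<in> L2 \<Omega>" "g \<in> L2 \<Omega>" "0 < \<tau>" "\<And>x. f x - u x = \<tau> *\<^sub>R g x"
    and "h g = ereal R" "conj_L2 \<Omega> h u = ereal (inner_L2 \<Omega> u g) - h g"
    and "v \<in> L2 \<Omega>"
  shows "ereal \<tau> * conj_L2 \<Omega> h u + ereal (normsq_L2 \<Omega> (\<lambda>x. u x - f x) / 2)
      + ereal (normsq_L2 \<Omega> (\<lambda>x. v x - u x) / 2)
    \<le> ereal \<tau> * conj_L2 \<Omega> h v + ereal (normsq_L2 \<Omega> (\<lambda>x. v x - f x) / 2)"
proof -
  have "ereal \<tau> * conj_L2 \<Omega> h u + ereal (normsq_L2 \<Omega> (\<lambda>x. u x - f x) / 2)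
      + ereal (normsq_L2 \<Omega> (\<lambda>x. v x - u x) / 2)
    = ereal \<tau> * (ereal (inner_L2 \<Omega> v g) - h g) + ereal (normsq_L2 \<Omega> (\<lambda>x. v x - f x) / 2)"
    using inner_normsq_L2_prox_identity[OF assms(1-3,8,5)] assms(6,7) by (simp add: algebra_simps)
  also have "\<dots> \<le> ereal \<tau> * conj_L2 \<Omega> h v + ereal (normsq_L2 \<Omega> (\<lambda>x. v x - f x) / 2)"
    using assms(3,4) by (intro add_right_mono ereal_mult_left_mono conj_L2_ge) simp_all
  finally show ?thesis .
qed

lemma is_prox_conj_L2_iff:
  assumes "f \<in> L2 \<Omega>" "u \<in> L2 \<Omega>" "g \<in> L2 \<Omega>" "0 < \<tau>" "\<And>x. f x - u x = \<tau> *\<^sub>R g x"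
    and "h g = ereal R" "conj_L2 \<Omega> h u = ereal (inner_L2 \<Omega> u g) - h g"
  shows "is_prox \<Omega> (conj_L2 \<Omega> h) \<tau> f w \<longleftrightarrow> w \<in> L2 \<Omega> \<and> (AE x in lebesgue_on \<Omega>. w x = u x)"
proof -
  define \<Phi> where "\<Phi> v = ereal \<tau> * conj_L2 \<Omega> h v + ereal (normsq_L2 \<Omega> (\<lambda>x. v x - f x) / 2)" for v
  have \<Phi>_u: "\<Phi> u = ereal (\<tau> * (inner_L2 \<Omega> u g - R) + normsq_L2 \<Omega> (\<lambda>x. u x - f x) / 2)"
    using assms(6,7) by (simp add: \<Phi>_def)
  have bound: "\<Phi> u + ereal (normsq_L2 \<Omega> (\<lambda>x. v x - u x) / 2) \<le> \<Phi> v" if "v \<in> L2 \<Omega>" for v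
    unfolding \<Phi>_def using assms that by (rule prox_objective_lower_bound)
  show ?thesis
  proof
    assume "is_prox \<Omega> (conj_L2 \<Omega> h) \<tau> f w"
    then have w: "w \<in> L2 \<Omega>" and "\<Phi> w \<le> \<Phi> u"
      using assms(2) by (auto simp: is_prox_def \<Phi>_def)
    have "\<Phi> u + ereal (normsq_L2 \<Omega> (\<lambda>x. w x - u x) / 2) \<le> \<Phi> u"
      using bound[OF w] \<open>\<Phi> w \<le> \<Phi> u\<close> by (rule order_trans)
    then have "normsq_L2 \<Omega> (\<lambda>x. w x - u x) \<le> 0"
      unfolding \<Phi>_u by simp
    then have "normsq_L2 \<Omega> (\<lambda>x. w x - u x) = 0"
      using normsq_L2_nonneg by (rule antisym)
    with w show "w \<in> L2 \<Omega> \<and> (AE x in lebesgue_on \<Omega>. w x = u x)"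
      using normsq_L2_diff_eq_0_iff[OF w assms(2)] by simp
  next
    assume "w \<in> L2 \<Omega> \<and> (AE x in lebesgue_on \<Omega>. w x = u x)"
    then have w: "w \<in> L2 \<Omega>" and ae: "AE x in lebesgue_on \<Omega>. w x = u x"
      by auto
    have "conj_L2 \<Omega> h w = conj_L2 \<Omega> h u"
      using w assms(2) ae by (rule conj_L2_cong_AE)
    moreover have "normsq_L2 \<Omega> (\<lambda>x. w x - f x) = normsq_L2 \<Omega> (\<lambda>x. u x - f x)"
      using w assms(1,2) ae by (intro normsq_L2_diff_cong_AE L2_measurable)
    ultimately have "\<Phi> w = \<Phi> u"
      by (simp add: \<Phi>_def)
    moreover have "\<Phi> u \<le> \<Phi> v" if "v \<in> L2 \<Omega>" for v
    proof -
      have "\<Phi> u \<le> \<Phi> u + ereal (normsq_L2 \<Omega> (\<lambda>x. v x - u x) / 2)"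
        using normsq_L2_nonneg[of \<Omega> "\<lambda>x. v x - u x"] by (simp add: \<Phi>_u)
      also have "\<dots> \<le> \<Phi> v"
        using that by (rule bound)
      finally show ?thesis .
    qed
    ultimately show "is_prox \<Omega> (conj_L2 \<Omega> h) \<tau> f w"
      using w by (simp add: is_prox_def \<Phi>_def)
  qed
qed

theorem mainTheorem6:
  fixes \<Omega> :: "(real^'d) set" and p :: "real^'d \<Rightarrow> real" and \<tau> :: real
    and f :: "real^'d \<Rightarrow> real^'m"
  assumes "open \<Omega>" and "connected \<Omega>"
    and "p \<in> borel_measurable (lebesgue_on \<Omega>)"
    and "\<forall>x\<in>\<Omega>. 1 \<le> p x \<and> p x \<le> 2"
    and "\<tau> > 0"
    and "f \<in> L2 \<Omega>"
  shows "(\<lambda>x. V \<tau> (f x) (p x) *\<^sub>R sgn (f x)) \<in> L2 \<Omega> \<and>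
         (\<forall>u. is_prox \<Omega> (conj_L2 \<Omega> (rho \<Omega> p)) \<tau> f u \<longleftrightarrow>
              u \<in> L2 \<Omega> \<and> (AE x in lebesgue_on \<Omega>. u x = V \<tau> (f x) (p x) *\<^sub>R sgn (f x)))"
proof -
  define u where "u x = V \<tau> (f x) (p x) *\<^sub>R sgn (f x)" for x
  define g where "g x = (1 / \<tau>) *\<^sub>R (f x - u x)" for x
  have u_L2: "u \<in> L2 \<Omega>"
  proof (rule L2_dominated[OF assms(6)])
    show "u \<in> borel_measurable (lebesgue_on \<Omega>)"
      unfolding u_def using assms(3-5) L2_measurable[OF assms(6)] by (intro borel_measurable_V_sgn) auto
    show "norm (u x) \<le> norm (f x)" if "x \<in> \<Omega>" for x
      using norm_V_sgn_le[where q = "p x" and z = "f x"] assms(4,5) that by (simp add: u_def)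
  qed
  have g_L2: "g \<in> L2 \<Omega>"
    unfolding g_def using assms(6) u_L2 by (intro L2_scaleR L2_diff)
  have "u x \<bullet> y - norm y powr p x \<le> u x \<bullet> g x - norm (g x) powr p x" if "x \<in> \<Omega>" for x y
    using V_sgn_inner_minus_powr_le[where q = "p x" and z = "f x"] assms(4,5) that by (simp add: u_def g_def)
  note conj_rho = conj_rho_eq_of_pointwise_max[OF u_L2 g_L2 assms(3) this]
  have "f x - u x = \<tau> *\<^sub>R g x" for x
    using assms(5) by (simp add: g_def)
  note prox = is_prox_conj_L2_iff[OF assms(6) u_L2 g_L2 assms(5) this conj_rho]
  show ?thesis
    unfolding u_def[symmetric] using u_L2 prox by simp
qed

end
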